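(* Let $\iota:B\to A$ be a homomorphism of groups and let $q:A\to B$ satisfy (ZL1), (ZL2), (ZL3). Then $\mathrm{Ker}(q)=\{a\in A: q(a)=1_B\}$ is a complement to $\iota(B)$ in $A$, i.e. $\mathrm{Ker}(q)$ is a subgroup of $A$ with $\iota(B)\cap\mathrm{Ker}(q)=\{1_A\}$ and $\iota(B)\,\mathrm{Ker}(q)=A$.
   Context: For a homomorphism $\iota:B\to A$, conditions on $q:A\to B$: (ZL1) $q(1_A)=1_B$; (ZL2) $q(\iota(b)a)=b\,q(a)$ for all $a\in A,b\in B$; (ZL3) $q(aa')=q(a\,\iota(q(a')))$ for all $a,a'\in A$. These maps constitute $\mathcal Z^1(\mathsf T^l_\iota,(B,m_B))$, the algebra structures on the left $B$-set $B$ for the monad $A\otimes_B-$ induced by $\iota$. For subgroups $U,V$ of $A$, $UV=\{uv:u\in U,v\in V\}$. *)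

theory Defs
  imports "HOL-Algebra.Algebra"
begin

definition ZL :: "('b, 'c) monoid_scheme \<Rightarrow> ('a, 'd) monoid_scheme \<Rightarrow> ('b \<Rightarrow> 'a) \<Rightarrow> ('a \<Rightarrow> 'b) \<Rightarrow> bool" where
  "ZL B A iota q \<longleftrightarrow>
     q \<in> carrier A \<rightarrow> carrier B \<and>
     q \<one>\<^bsub>A\<^esub> = \<one>\<^bsub>B\<^esub> \<and>
     (\<forall>a\<in>carrier A. \<forall>b\<in>carrier B. q (iota b \<otimes>\<^bsub>A\<^esub> a) = b \<otimes>\<^bsub>B\<^esub> q a) \<and>
     (\<forall>a\<in>carrier A. \<forall>a'\<in>carrier A. q (a \<otimes>\<^bsub>A\<^esub> a') = q (a \<otimes>\<^bsub>A\<^esub> iota (q a')))"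

end

theory Submission
  imports Defs
begin

text \<open>Since \<open>q\<close> is a left inverse of \<open>\<iota>\<close> that is \<open>B\<close>-equivariant, every \<open>a\<close> factors as
  \<open>\<iota>(q a) \<cdot> (\<iota>(q a)\<inverse> a)\<close> with the second factor in \<open>Ker q\<close>. Axiom (ZL3) says that \<open>q(a a')\<close>
  only depends on \<open>q a'\<close>, so \<open>Ker q\<close> is closed under products and inverses.\<close>

lemma set_mult_memI: "h \<in> H \<Longrightarrow> k \<in> K \<Longrightarrow> h \<otimes>\<^bsub>G\<^esub> k \<in> H <#>\<^bsub>G\<^esub> K"
  unfolding set_mult_def by blast

locale ZL_retraction = group_hom B A iota for B (structure) and A (structure) and iota +
  fixes q
  assumes ZL: "ZL B A iota q"
begin

lemma q_closed [simp]: "a \<in> carrier A \<Longrightarrow> q a \<in> carrier B"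
  using ZL unfolding ZL_def by (blast intro: funcset_mem)

lemma q_one [simp]: "q \<one>\<^bsub>A\<^esub> = \<one>"
  using ZL unfolding ZL_def by blast

lemma q_iota_mult:
  "a \<in> carrier A \<Longrightarrow> b \<in> carrier B \<Longrightarrow> q (iota b \<otimes>\<^bsub>A\<^esub> a) = b \<otimes> q a"
  using ZL unfolding ZL_def by blast

(* Not a simp rule: its right-hand side contains an instance of its left-hand side. *)
lemma q_mult_eq_q_mult_iota_q:
  "a \<in> carrier A \<Longrightarrow> a' \<in> carrier A \<Longrightarrow> q (a \<otimes>\<^bsub>A\<^esub> a') = q (a \<otimes>\<^bsub>A\<^esub> iota (q a'))"
  using ZL unfolding ZL_def by blast

lemma q_iota [simp]: "b \<in> carrier B \<Longrightarrow> q (iota b) = b"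
  using q_iota_mult[of "\<one>\<^bsub>A\<^esub>" b] by simp

lemma q_mult_kernel:
  assumes "a \<in> carrier A" and "k \<in> kernel A B q"
  shows "q (a \<otimes>\<^bsub>A\<^esub> k) = q a"
proof -
  have "q (a \<otimes>\<^bsub>A\<^esub> k) = q (a \<otimes>\<^bsub>A\<^esub> iota (q k))"
    using assms q_mult_eq_q_mult_iota_q unfolding kernel_def by blast
  also have "\<dots> = q a"
    using assms by (simp add: kernel_def)
  finally show ?thesis .
qed

lemma subgroup_kernel: "subgroup (kernel A B q) A"
proof
  fix x y assume "x \<in> kernel A B q" "y \<in> kernel A B q"
  then show "x \<otimes>\<^bsub>A\<^esub> y \<in> kernel A B q"
    using q_mult_kernel by (simp add: kernel_def)
next
  fix x assume "x \<in> kernel A B q"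
  then show "inv\<^bsub>A\<^esub> x \<in> kernel A B q"
    using q_mult_kernel[of "inv\<^bsub>A\<^esub> x" x] by (simp add: kernel_def)
qed (auto simp: kernel_def)

lemma image_inter_kernel: "iota ` carrier B \<inter> kernel A B q = {\<one>\<^bsub>A\<^esub>}"
  by (force simp: kernel_def)

lemma kernel_decomposition:
  assumes a: "a \<in> carrier A"
  shows "a = iota (q a) \<otimes>\<^bsub>A\<^esub> (inv\<^bsub>A\<^esub> iota (q a) \<otimes>\<^bsub>A\<^esub> a)"
    and "inv\<^bsub>A\<^esub> iota (q a) \<otimes>\<^bsub>A\<^esub> a \<in> kernel A B q"
proof -
  show "a = iota (q a) \<otimes>\<^bsub>A\<^esub> (inv\<^bsub>A\<^esub> iota (q a) \<otimes>\<^bsub>A\<^esub> a)"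
    using a by (simp add: H.m_assoc [symmetric])
  have "q (inv\<^bsub>A\<^esub> iota (q a) \<otimes>\<^bsub>A\<^esub> a) = inv (q a) \<otimes> q a"
    using a q_iota_mult[of a "inv (q a)"] by simp
  then show "inv\<^bsub>A\<^esub> iota (q a) \<otimes>\<^bsub>A\<^esub> a \<in> kernel A B q"
    using a by (simp add: kernel_def)
qed

lemma image_set_mult_kernel: "iota ` carrier B <#>\<^bsub>A\<^esub> kernel A B q = carrier A"
proof (rule equalityI)
  show "iota ` carrier B <#>\<^bsub>A\<^esub> kernel A B q \<subseteq> carrier A"
    by (intro H.set_mult_closed subgroup.subset[OF subgroup_kernel] image_subsetI hom_closed)
  show "carrier A \<subseteq> iota ` carrier B <#>\<^bsub>A\<^esub> kernel A B q"
  proof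
    fix a assume a: "a \<in> carrier A"
    have "iota (q a) \<otimes>\<^bsub>A\<^esub> (inv\<^bsub>A\<^esub> iota (q a) \<otimes>\<^bsub>A\<^esub> a)
        \<in> iota ` carrier B <#>\<^bsub>A\<^esub> kernel A B q"
      using a by (intro set_mult_memI imageI q_closed kernel_decomposition(2))
    then show "a \<in> iota ` carrier B <#>\<^bsub>A\<^esub> kernel A B q"
      by (simp flip: kernel_decomposition(1)[OF a])
  qed
qed

end

theorem proposition4p2:
  fixes A :: "('a, 'c) monoid_scheme" and B :: "('b, 'd) monoid_scheme"
  assumes "group A" and "group B"
    and "iota \<in> hom B A"
    and "ZL B A iota q"
  shows "subgroup {a \<in> carrier A. q a = \<one>\<^bsub>B\<^esub>} A
       \<and> iota ` carrier B \<inter> {a \<in> carrier A. q a = \<one>\<^bsub>B\<^esub>} = {\<one>\<^bsub>A\<^esub>}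
       \<and> (iota ` carrier B) <#>\<^bsub>A\<^esub> {a \<in> carrier A. q a = \<one>\<^bsub>B\<^esub>} = carrier A"
proof -
  have "group_hom B A iota"
    using assms by (simp add: group_hom_def group_hom_axioms_def)
  then interpret ZL_retraction B A iota q
    using assms(4) by (rule ZL_retraction.intro[OF _ ZL_retraction_axioms.intro])
  have kernel_eq: "{a \<in> carrier A. q a = \<one>\<^bsub>B\<^esub>} = kernel A B q"
    by (simp add: kernel_def)
  show ?thesis
    unfolding kernel_eq using subgroup_kernel image_inter_kernel image_set_mult_kernel by blast
qed

end
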